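(* Let $b$ be a prime, $s,m\in\mathbb{N}$, and let $\mathcal{P}$ be a digital $((t_{\mathfrak{u}})_{\mathfrak{u}\subseteq[s]},m,s)$-net over $\mathbb{F}_b$ with generating matrices $C_1^{(m)},\dots,C_s^{(m)}\in\mathbb{F}_b^{m\times m}$. Let $0=w_1\le\dots\le w_s$ be reduction indices, $\widetilde{C}_1^{(m)},\dots,\widetilde{C}_s^{(m)}$ the corresponding row reduced matrices, and let $(\widetilde{t}_{\mathfrak{u}})_{\mathfrak{u}\subseteq[s]}$ be the minimal quality parameters of the projections of the digital net generated by the $\widetilde{C}_j^{(m)}$. Then for every nonempty $\mathfrak{u}\subseteq[s]$, writing $\overline{\mathfrak{u}}=\max\mathfrak{u}$, \[ \max\{0,\, m-\max\{w_{\overline{\mathfrak{u}}},t_{\mathfrak{u}}\}\}\le \rho_m\big((\widetilde{C}_j^{(m)})_{j\in\mathfrak{u}}\big)\le \max\{0,\, m-w_{\overline{\mathfrak{u}}}\}, \] and $\widetilde{t}_{\mathfrak{u}}\le\min\{m,\max\{w_{\overline{\mathfrak{u}}},t_{\mathfrak{u}}\}\}$.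
   Context: $[s]=\{1,\dots,s\}$. Digital nets over $\mathbb{F}_b$: for matrices $C_1^{(m)},\dots,C_s^{(m)}\in\mathbb{F}_b^{m\times m}$, the generated net consists of the $b^m$ points $\boldsymbol{x}_k$, $0\le k<b^m$, with $x_{k,j}=(C_j^{(m)}\vec{k})\cdot(b^{-1},\dots,b^{-m})$, where $\vec{k}=(k_0,\dots,k_{m-1})^\top$ is the base-$b$ digit vector of $k=\sum k_ib^i$ and the product is computed over $\mathbb{F}_b$ (identified with $\{0,\dots,b-1\}$). A $(t,m,s)$-net in base $b$ is a set of $b^m$ points in $[0,1)^s$ such that every elementary interval $\prod_j[a_jb^{-d_j},(a_j+1)b^{-d_j})$ of volume $b^{t-m}$ contains exactly $b^t$ points. A digital $((t_{\mathfrak{u}})_{\mathfrak{u}\subseteq[s]},m,s)$-net is a digital net such that, for each nonempty $\mathfrak{u}\subseteq[s]$, the projection onto the coordinates in $\mathfrak{u}$ (generated by $(C_j^{(m)})_{j\in\mathfrak{u}}$) is a $(t_{\mathfrak{u}},m,|\mathfrak{u}|)$-net; the minimal quality parameter of a projection is the smallest such value. The linear independence parameter $\rho_m$ of a family of $m\times m$ matrices $(C_j)_{j\in J}$ is the largest $d$ such that for all $d_j\in\mathbb{N}_0$ ($j\in J$) with $\sum_j d_j=d$, the collection of the first $d_j$ rows of $C_j$, $j\in J$, is linearly independent over $\mathbb{F}_b$. Row reduction: $\widetilde{C}_j^{(m)}$ equals $C_j^{(m)}$ except that its last $\min(m,w_j)$ rows are set to zero. *)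

theory Defs
  imports Complex_Main "HOL-Computational_Algebra.Primes"
begin

text \<open>The field F_b (b prime) is identified with {0..<b}, arithmetic mod b.
An m x m matrix over F_b is a function  nat => nat => nat  (row index i < m,
column index k < m, 0-based; row i here is row i+1 of the paper).
A family of matrices is indexed by coordinates j (1-based, j in {1..s}).\<close>

definition digit :: "nat \<Rightarrow> nat \<Rightarrow> nat \<Rightarrow> nat" where
  "digit b k l = (k div b ^ l) mod b"

definition dnet_point :: "nat \<Rightarrow> nat \<Rightarrow> (nat \<Rightarrow> nat \<Rightarrow> nat \<Rightarrow> nat) \<Rightarrow> nat \<Rightarrow> nat \<Rightarrow> real" where
  "dnet_point b m C k j =
     (\<Sum>i<m. real ((\<Sum>l<m. C j i l * digit b k l) mod b) / real b ^ (i + 1))"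

text \<open>The projection onto coordinates u of the digital net generated by C (b^m points,
counted with multiplicity) is a (t,m,|u|)-net in base b.\<close>
definition is_proj_tms_net :: "nat \<Rightarrow> nat \<Rightarrow> (nat \<Rightarrow> nat \<Rightarrow> nat \<Rightarrow> nat) \<Rightarrow> nat set \<Rightarrow> nat \<Rightarrow> bool" where
  "is_proj_tms_net b m C u t \<longleftrightarrow> t \<le> m \<and>
     (\<forall>d a. (\<Sum>j\<in>u. d j) = m - t \<longrightarrow> (\<forall>j\<in>u. a j < b ^ d j) \<longrightarrow>
        card {k. k < b ^ m \<and> (\<forall>j\<in>u.
             real (a j) / real b ^ d j \<le> dnet_point b m C k j \<and>
             dnet_point b m C k j < real (a j + 1) / real b ^ d j)} = b ^ t)"

definition min_quality :: "nat \<Rightarrow> nat \<Rightarrow> (nat \<Rightarrow> nat \<Rightarrow> nat \<Rightarrow> nat) \<Rightarrow> nat set \<Rightarrow> nat" where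
  "min_quality b m C u = (LEAST t. is_proj_tms_net b m C u t)"

definition rows_lin_indep :: "nat \<Rightarrow> nat \<Rightarrow> (nat \<Rightarrow> nat \<Rightarrow> nat \<Rightarrow> nat) \<Rightarrow> nat set \<Rightarrow> (nat \<Rightarrow> nat) \<Rightarrow> bool" where
  "rows_lin_indep b m C J d \<longleftrightarrow>
     (\<forall>c::nat \<Rightarrow> nat \<Rightarrow> nat. (\<forall>j\<in>J. \<forall>i<d j. c j i < b) \<longrightarrow>
        (\<forall>k<m. (\<Sum>j\<in>J. \<Sum>i<d j. c j i * C j i k) mod b = 0) \<longrightarrow>
        (\<forall>j\<in>J. \<forall>i<d j. c j i = 0))"

definition lin_indep_param :: "nat \<Rightarrow> nat \<Rightarrow> (nat \<Rightarrow> nat \<Rightarrow> nat \<Rightarrow> nat) \<Rightarrow> nat set \<Rightarrow> nat" where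
  "lin_indep_param b m C J =
     (GREATEST e. \<forall>d. (\<Sum>j\<in>J. d j) = e \<longrightarrow> rows_lin_indep b m C J d)"

definition row_reduce :: "nat \<Rightarrow> (nat \<Rightarrow> nat) \<Rightarrow> (nat \<Rightarrow> nat \<Rightarrow> nat \<Rightarrow> nat) \<Rightarrow> nat \<Rightarrow> nat \<Rightarrow> nat \<Rightarrow> nat" where
  "row_reduce m w C j i k = (if m - min m (w j) \<le> i then 0 else C j i k)"

end

theory Submission
  imports Defs "HOL-Library.FuncSet" "HOL-Number_Theory.Cong"
begin

text \<open>The base-b digits of the j-th coordinate of the k-th net point are the residues
of C_j applied to the digit vector of k. Hence the points in an elementary box with side
lengths b^(-d_j) are exactly the digit vectors solving a linear system over F_b whose
equations are the first d_j rows of the C_j and whose right-hand side encodes the box.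
If these n rows are independent, every right-hand side has b^(m-n) solutions; if every
right-hand side is solvable, the rows are independent. So the projection onto u is a
(T,m,|u|)-net iff every selection of m - T leading rows is independent.
Row reduction keeps the first m - w_j rows of C_j, and w_j is largest at j = max u. Row
selections of total size m - max(w_(max u), t_u) therefore only see rows of the original
matrices and are independent by the net property; this gives the lower bound for rho_m
and, by the converse, the bound for the quality parameter. Row m - w_(max u) of the last
reduced matrix is zero, which gives the upper bound.\<close>

section \<open>Digit expansions in base b\<close>

definition digits_val :: "nat \<Rightarrow> nat \<Rightarrow> (nat \<Rightarrow> nat) \<Rightarrow> nat" where
  "digits_val b d y = (\<Sum>i<d. y i * b ^ (d - 1 - i))"

lemma digits_val_0 [simp]: "digits_val b 0 y = 0"
  by (simp add: digits_val_def)

lemma digits_val_Suc: "digits_val b (Suc d) y = digits_val b d y * b + y d"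
proof -
  have "digits_val b d y * b = (\<Sum>i<d. y i * b ^ (Suc d - 1 - i))"
    unfolding digits_val_def sum_distrib_right
    by (intro sum.cong) (auto simp flip: power_Suc2 simp: Suc_diff_Suc mult.assoc)
  then show ?thesis
    by (simp add: digits_val_def)
qed

lemma digits_val_add:
  "digits_val b (d + e) y = digits_val b d y * b ^ e + digits_val b e (\<lambda>i. y (d + i))"
  by (induction e) (simp_all add: digits_val_Suc algebra_simps)

lemma digits_val_less:
  assumes "\<forall>i<d. y i < b"
  shows "digits_val b d y < b ^ d"
  using assms
proof (induction d)
  case (Suc d)
  then have "digits_val b d y * b + y d < (digits_val b d y + 1) * b"
    by simp
  also have "\<dots> \<le> b ^ d * b"
    using Suc by (intro mult_right_mono) auto
  finally show ?case
    by (simp add: digits_val_Suc mult.commute)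
qed simp

lemma digits_val_digit:
  assumes "\<forall>i<d. y i < b" and "i < d"
  shows "digits_val b d y div b ^ (d - 1 - i) mod b = y i"
proof -
  have "digits_val b d y = digits_val b (Suc i) y * b ^ (d - 1 - i) + digits_val b (d - 1 - i) (\<lambda>p. y (Suc i + p))"
    using digits_val_add[of b "Suc i" "d - 1 - i" y] assms(2) by simp
  moreover have "digits_val b (d - 1 - i) (\<lambda>p. y (Suc i + p)) < b ^ (d - 1 - i)"
    using assms by (intro digits_val_less) auto
  moreover have "0 < b"
    using assms by auto
  ultimately have "digits_val b d y div b ^ (d - 1 - i) = digits_val b (Suc i) y"
    by (simp add: div_add1_eq)
  then show ?thesis
    using assms by (simp add: digits_val_Suc)
qed

lemma digits_val_of_digits:
  assumes "a < b ^ d"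
  shows "digits_val b d (\<lambda>i. a div b ^ (d - 1 - i) mod b) = a"
  using assms
proof (induction d arbitrary: a)
  case (Suc d)
  have "0 < b"
    using Suc.prems by (cases b) auto
  then have "a div b < b ^ d"
    using Suc.prems by (simp add: div_less_iff_less_mult mult.commute)
  then have "digits_val b d (\<lambda>i. a div b div b ^ (d - 1 - i) mod b) = a div b"
    by (rule Suc.IH)
  moreover have "a div b ^ (Suc d - 1 - i) = a div b div b ^ (d - 1 - i)" if "i < d" for i
  proof -
    have "Suc d - 1 - i = Suc (d - 1 - i)"
      using that by simp
    then show ?thesis
      by (simp add: div_mult2_eq mult.commute)
  qed
  ultimately have "digits_val b d (\<lambda>i. a div b ^ (Suc d - 1 - i) mod b) = a div b"
    by (simp add: digits_val_def)
  then show ?case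
    by (simp add: digits_val_Suc)
qed simp

lemma digits_val_eq_iff:
  assumes "\<forall>i<d. y i < b" and "a < b ^ d"
  shows "digits_val b d y = a \<longleftrightarrow> (\<forall>i<d. y i = a div b ^ (d - 1 - i) mod b)"
  using digits_val_digit[OF assms(1)] digits_val_of_digits[OF assms(2)]
  by (auto simp: digits_val_def)

lemma sum_digits_divide_power:
  assumes "0 < b"
  shows "(\<Sum>i<m. real (y i) / real b ^ (i + 1)) = real (digits_val b m y) / real b ^ m"
proof -
  have "real (y i) / real b ^ (i + 1) = real (y i) * real b ^ (m - 1 - i) / real b ^ m"
    if "i < m" for i
  proof -
    have "(i + 1) + (m - 1 - i) = m"
      using that by simp
    then have "real b ^ m = real b ^ (i + 1) * real b ^ (m - 1 - i)"
      by (metis power_add)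
    then show ?thesis
      using assms by simp
  qed
  then show ?thesis
    by (simp add: digits_val_def sum_divide_distrib)
qed

lemma mult_le_add_less_mult_iff:
  fixes a h l q :: nat
  assumes "l < q"
  shows "a * q \<le> h * q + l \<and> h * q + l < (a + 1) * q \<longleftrightarrow> h = a"
proof
  assume "a * q \<le> h * q + l \<and> h * q + l < (a + 1) * q"
  then have "h * q < (a + 1) * q" and "a * q < (h + 1) * q"
    using assms by simp_all
  then have "h < a + 1" and "a < h + 1"
    using mult_less_cancel2 by blast+
  then show "h = a"
    by simp
qed (use assms in simp)

lemma in_interval_iff_digits:
  assumes "0 < b" and "d \<le> m" and "a < b ^ d" and y: "\<forall>i<m. y i < b"
  shows "real a / real b ^ d \<le> real (digits_val b m y) / real b ^ m
      \<and> real (digits_val b m y) / real b ^ m < real (a + 1) / real b ^ d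
    \<longleftrightarrow> (\<forall>i<d. y i = a div b ^ (d - 1 - i) mod b)"
proof -
  define q where "q = b ^ (m - d)"
  define L where "L = digits_val b (m - d) (\<lambda>i. y (d + i))"
  have N: "digits_val b m y = digits_val b d y * q + L"
    using digits_val_add[of b d "m - d" y] assms(2) by (simp add: q_def L_def)
  have "L < q"
    unfolding L_def q_def using y assms(2) by (intro digits_val_less) auto
  have bm: "real b ^ m = real b ^ d * real q"
    using assms(2) by (simp add: q_def flip: power_add)
  have "0 < q"
    using assms(1) by (simp add: q_def)
  have "real a / real b ^ d \<le> real (digits_val b m y) / real b ^ m \<longleftrightarrow> a * q \<le> digits_val b m y"
    using assms(1) \<open>0 < q\<close> unfolding bm by (simp add: field_simps flip: of_nat_mult)
  moreover have "real (digits_val b m y) / real b ^ m < real (a + 1) / real b ^ d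
      \<longleftrightarrow> digits_val b m y < (a + 1) * q"
    using assms(1) \<open>0 < q\<close> unfolding bm by (simp add: field_simps flip: of_nat_mult of_nat_add)
  ultimately show ?thesis
    using mult_le_add_less_mult_iff[OF \<open>L < q\<close>] digits_val_eq_iff[of d y b a] y assms(2,3)
    unfolding N by auto
qed

lemma bij_betw_digit_vector:
  assumes "0 < b"
  shows "bij_betw (\<lambda>k. restrict (digit b k) {..<m}) {..<b ^ m} (PiE {..<m} (\<lambda>_. {..<b}))"
proof -
  let ?f = "\<lambda>k. restrict (digit b k) {..<m}"
  have rep: "k = digits_val b m (\<lambda>i. digit b k (m - 1 - i))" if "k < b ^ m" for k
    using digits_val_of_digits[OF that] by (simp add: digit_def)
  have "inj_on ?f {..<b ^ m}"
  proof (rule inj_onI)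
    fix k k'
    assume "k \<in> {..<b ^ m}" "k' \<in> {..<b ^ m}" and eq: "?f k = ?f k'"
    have "digit b k l = digit b k' l" if "l < m" for l
      using fun_cong[OF eq, of l] that by simp
    then have "digits_val b m (\<lambda>i. digit b k (m - 1 - i)) = digits_val b m (\<lambda>i. digit b k' (m - 1 - i))"
      unfolding digits_val_def by (intro sum.cong) auto
    then show "k = k'"
      using rep \<open>k \<in> {..<b ^ m}\<close> \<open>k' \<in> {..<b ^ m}\<close> by (metis lessThan_iff)
  qed
  moreover have "?f ` {..<b ^ m} \<subseteq> PiE {..<m} (\<lambda>_. {..<b})"
    using assms by (simp add: image_subset_iff restrict_PiE_iff digit_def)
  moreover have "card (?f ` {..<b ^ m}) = card (PiE {..<m} (\<lambda>_. {..<b}))"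
    using calculation(1) by (simp add: card_image card_PiE)
  ultimately show ?thesis
    unfolding bij_betw_def by (simp add: card_subset_eq finite_PiE)
qed

lemma card_preimage_bij_betw:
  assumes "bij_betw f A B" and "S \<subseteq> B"
  shows "card {x \<in> A. f x \<in> S} = card S"
proof -
  have "f ` {x \<in> A. f x \<in> S} = S"
    using assms by (auto simp: bij_betw_def)
  moreover have "inj_on f {x \<in> A. f x \<in> S}"
    using assms(1) by (auto simp: bij_betw_def intro: inj_on_subset)
  ultimately show ?thesis
    by (metis card_image)
qed

section \<open>Linear systems over the prime field\<close>

lemma card_affine_cong_prime:
  fixes v s r :: int
  assumes "prime b" and "\<not> int b dvd v"
  shows "card {z \<in> {..<b}. [v * int z + s = r] (mod int b)} = 1"
proof -
  have "prime (int b)"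
    using assms(1) by simp
  then have cop: "coprime v (int b)"
    using assms(2) prime_imp_coprime coprime_commute by blast
  then obtain v' where v': "[v * v' = 1] (mod int b)"
    using cong_solve_coprime_int by blast
  have "0 < b"
    using assms(1) prime_gt_0_nat by blast
  define z0 where "z0 = nat ((v' * (r - s)) mod int b)"
  have "int z0 = (v' * (r - s)) mod int b"
    using \<open>0 < b\<close> by (simp add: z0_def)
  then have "[v * int z0 = v * v' * (r - s)] (mod int b)"
    by (metis cong_mod_left cong_refl cong_scalar_left mult.assoc)
  also have "[v * v' * (r - s) = 1 * (r - s)] (mod int b)"
    by (rule cong_scalar_right[OF v'])
  finally have sol: "[v * int z0 + s = r] (mod int b)"
    using cong_add_rcancel[of "v * int z0" s "r - s" "int b"] by simp
  have "z0 < b"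
    using \<open>0 < b\<close> by (simp add: z0_def nat_less_iff)
  have uniq: "z = z0" if "z < b" and "[v * int z + s = r] (mod int b)" for z
  proof -
    have "[v * int z + s = v * int z0 + s] (mod int b)"
      using that(2) sol by (metis cong_sym cong_trans)
    then have "[int z = int z0] (mod int b)"
      using cop by (simp add: cong_add_rcancel cong_mult_lcancel)
    then show ?thesis
      using that(1) \<open>z0 < b\<close> by (simp add: cong_int_iff cong_less_modulus_unique_nat)
  qed
  have "{z \<in> {..<b}. [v * int z + s = r] (mod int b)} = {z0}"
    using \<open>z0 < b\<close> sol uniq by blast
  then show ?thesis
    by simp
qed

lemma card_pairs_eq_sum_card:
  assumes "finite A" and "finite B"
  shows "card {(x, y) \<in> A \<times> B. P x y} = (\<Sum>y\<in>B. card {x \<in> A. P x y})"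
proof -
  have "{(x, y) \<in> A \<times> B. P x y} = Sigma A (\<lambda>x. {y \<in> B. P x y})"
    by auto
  then have "card {(x, y) \<in> A \<times> B. P x y} = (\<Sum>x\<in>A. \<Sum>y\<in>{y \<in> B. P x y}. 1)"
    using assms by simp
  also have "\<dots> = (\<Sum>y\<in>B. \<Sum>x\<in>{x \<in> A. P x y}. 1)"
    using assms by (rule sum.swap_restrict)
  finally show ?thesis
    by simp
qed

lemma card_hyperplane_cong_prime:
  fixes v :: "'a \<Rightarrow> int" and r :: int
  assumes "prime b" and "finite X" and "p \<in> X" and "\<not> int b dvd v p"
  shows "card {x \<in> PiE X (\<lambda>_. {..<b}). [(\<Sum>l\<in>X. v l * int (x l)) = r] (mod int b)}
    = b ^ (card X - 1)"
proof -
  define X' where "X' = X - {p}"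
  define f where "f = (\<lambda>(z, g). g(p := z :: nat))"
  define P where "P z g \<longleftrightarrow> [v p * int z + (\<Sum>l\<in>X'. v l * int (g l)) = r] (mod int b)" for z g
  have X: "X = insert p X'" "p \<notin> X'" "finite X'"
    using assms(2,3) by (auto simp: X'_def)
  have sum_upd: "(\<Sum>l\<in>X. v l * int (f (z, g) l)) = v p * int z + (\<Sum>l\<in>X'. v l * int (g l))"
    for z g
  proof -
    have "(\<Sum>l\<in>X'. v l * int (f (z, g) l)) = (\<Sum>l\<in>X'. v l * int (g l))"
      using X(2) by (intro sum.cong) (auto simp: f_def)
    then show ?thesis
      using X by (simp add: f_def)
  qed
  have "{x \<in> PiE X (\<lambda>_. {..<b}). [(\<Sum>l\<in>X. v l * int (x l)) = r] (mod int b)}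
      = f ` {(z, g) \<in> {..<b} \<times> PiE X' (\<lambda>_. {..<b}). P z g}"
    unfolding X(1) PiE_insert_eq f_def[symmetric] by (auto simp: sum_upd P_def X(1)[symmetric])
  also have "card \<dots> = card {(z, g) \<in> {..<b} \<times> PiE X' (\<lambda>_. {..<b}). P z g}"
    using inj_combinator[OF X(2), of "\<lambda>_. {..<b}"]
    by (intro card_image) (auto simp: f_def intro: inj_on_subset)
  also have "\<dots> = (\<Sum>g\<in>PiE X' (\<lambda>_. {..<b}). card {z \<in> {..<b}. P z g})"
    using X(3) by (intro card_pairs_eq_sum_card) (auto simp: finite_PiE)
  also have "\<dots> = (\<Sum>g\<in>PiE X' (\<lambda>_. {..<b}). 1)"
    unfolding P_def using assms(1,4) by (intro sum.cong refl card_affine_cong_prime)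
  also have "\<dots> = b ^ (card X - 1)"
    using X by (simp add: card_PiE)
  finally show ?thesis .
qed

definition rows_indep_mod :: "nat \<Rightarrow> nat \<Rightarrow> 'i set \<Rightarrow> ('i \<Rightarrow> nat \<Rightarrow> nat) \<Rightarrow> bool" where
  "rows_indep_mod b m I A \<longleftrightarrow>
     (\<forall>c. (\<forall>i\<in>I. c i < b) \<longrightarrow> (\<forall>l<m. (\<Sum>i\<in>I. c i * A i l) mod b = 0) \<longrightarrow> (\<forall>i\<in>I. c i = 0))"

definition solutions_mod :: "nat \<Rightarrow> nat \<Rightarrow> 'i set \<Rightarrow> ('i \<Rightarrow> nat \<Rightarrow> nat) \<Rightarrow> ('i \<Rightarrow> nat) \<Rightarrow> (nat \<Rightarrow> nat) set" where
  "solutions_mod b m I A y =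
     {x \<in> PiE {..<m} (\<lambda>_. {..<b}). \<forall>i\<in>I. (\<Sum>l<m. A i l * x l) mod b = y i}"

lemma solutions_mod_cong:
  assumes "\<forall>i\<in>I. y i = y' i"
  shows "solutions_mod b m I A y = solutions_mod b m I A y'"
  using assms by (simp add: solutions_mod_def)

definition lin_comb_holds ::
    "nat \<Rightarrow> nat \<Rightarrow> 'i set \<Rightarrow> ('i \<Rightarrow> nat \<Rightarrow> nat) \<Rightarrow> ('i \<Rightarrow> nat) \<Rightarrow> ('i \<Rightarrow> nat) \<Rightarrow> (nat \<Rightarrow> nat) \<Rightarrow> bool" where
  "lin_comb_holds b m I A y c x \<longleftrightarrow>
     [(\<Sum>i\<in>I. c i * (\<Sum>l<m. A i l * x l)) = (\<Sum>i\<in>I. c i * y i)] (mod b)"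

lemma sum_lin_comb_swap:
  "(\<Sum>i\<in>I. c i * (\<Sum>l\<in>L. A i l * x l)) = (\<Sum>l\<in>L. (\<Sum>i\<in>I. c i * A i l) * (x l :: 'a :: comm_semiring_0))"
proof -
  have "(\<Sum>i\<in>I. c i * (\<Sum>l\<in>L. A i l * x l)) = (\<Sum>i\<in>I. \<Sum>l\<in>L. c i * A i l * x l)"
    by (simp add: sum_distrib_left mult.assoc)
  also have "\<dots> = (\<Sum>l\<in>L. \<Sum>i\<in>I. c i * A i l * x l)"
    by (rule sum.swap)
  finally show ?thesis
    by (simp add: sum_distrib_right)
qed

lemma lin_comb_holds_iff_points:
  "lin_comb_holds b m I A y c x \<longleftrightarrow>
     [(\<Sum>l<m. int (\<Sum>i\<in>I. c i * A i l) * int (x l)) = int (\<Sum>i\<in>I. c i * y i)] (mod int b)"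
proof -
  have "(\<Sum>i\<in>I. c i * (\<Sum>l<m. A i l * x l)) = (\<Sum>l<m. (\<Sum>i\<in>I. c i * A i l) * x l)"
    by (rule sum_lin_comb_swap)
  then show ?thesis
    unfolding lin_comb_holds_def cong_int_iff[symmetric] by (simp only: of_nat_sum of_nat_mult)
qed

lemma lin_comb_holds_iff_coeffs:
  "lin_comb_holds b m I A y c x \<longleftrightarrow>
     [(\<Sum>i\<in>I. (int (\<Sum>l<m. A i l * x l) - int (y i)) * int (c i)) = 0] (mod int b)"
proof -
  have "int (\<Sum>i\<in>I. c i * s i) - int (\<Sum>i\<in>I. c i * y i)
      = (\<Sum>i\<in>I. (int (s i) - int (y i)) * int (c i))" for s
  proof -
    have "(\<Sum>i\<in>I. (int (s i) - int (y i)) * int (c i)) = (\<Sum>i\<in>I. int (c i * s i) - int (c i * y i))"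
      by (simp add: right_diff_distrib mult.commute)
    also have "\<dots> = int (\<Sum>i\<in>I. c i * s i) - int (\<Sum>i\<in>I. c i * y i)"
      by (simp only: sum_subtractf of_nat_sum)
    finally show ?thesis
      by (rule sym)
  qed
  then show ?thesis
    unfolding lin_comb_holds_def cong_int_iff[symmetric] cong_iff_dvd_diff
    by (simp only: diff_zero)
qed

lemma card_lin_comb_holds_points:
  assumes "prime b" and "rows_indep_mod b m I A"
    and "c \<in> PiE I (\<lambda>_. {..<b})" and "c \<noteq> (\<lambda>i\<in>I. 0)"
  shows "card {x \<in> PiE {..<m} (\<lambda>_. {..<b}). lin_comb_holds b m I A y c x} = b ^ (m - 1)"
proof -
  have "\<exists>i\<in>I. c i \<noteq> 0"
  proof (rule ccontr)
    assume "\<not> (\<exists>i\<in>I. c i \<noteq> 0)"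
    then have "c = (\<lambda>i\<in>I. 0)"
      using PiE_arb[OF assms(3)] by auto
    then show False
      using assms(4) by contradiction
  qed
  moreover have "\<forall>i\<in>I. c i < b"
    using assms(3) by auto
  ultimately have "\<not> (\<forall>l<m. (\<Sum>i\<in>I. c i * A i l) mod b = 0)"
    using assms(2)[unfolded rows_indep_mod_def, THEN spec[of _ c]] by metis
  then obtain l where l: "l < m" "(\<Sum>i\<in>I. c i * A i l) mod b \<noteq> 0"
    by blast
  then have "\<not> int b dvd int (\<Sum>i\<in>I. c i * A i l)"
    by (simp only: int_dvd_int_iff) (simp add: dvd_eq_mod_eq_0)
  then show ?thesis
    unfolding lin_comb_holds_iff_points
    using card_hyperplane_cong_prime[OF assms(1), of "{..<m}" l] l by simp
qed

lemma card_lin_comb_holds_coeffs: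
  assumes "prime b" and "finite I" and "y \<in> PiE I (\<lambda>_. {..<b})"
    and "x \<notin> solutions_mod b m I A y" and "x \<in> PiE {..<m} (\<lambda>_. {..<b})"
  shows "card {c \<in> PiE I (\<lambda>_. {..<b}). lin_comb_holds b m I A y c x} = b ^ (card I - 1)"
proof -
  obtain i where i: "i \<in> I" "(\<Sum>l<m. A i l * x l) mod b \<noteq> y i"
    using assms(4,5) by (auto simp: solutions_mod_def)
  then have "\<not> [(\<Sum>l<m. A i l * x l) = y i] (mod b)"
    using assms(3) by (auto simp: cong_def PiE_iff)
  then have "\<not> int b dvd (int (\<Sum>l<m. A i l * x l) - int (y i))"
    by (simp add: cong_iff_dvd_diff flip: cong_int_iff)
  then show ?thesis
    unfolding lin_comb_holds_iff_coeffs
    using card_hyperplane_cong_prime[OF assms(1,2) i(1)] by simp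
qed

lemma lin_comb_holds_if_solution:
  assumes "x \<in> solutions_mod b m I A y"
  shows "lin_comb_holds b m I A y c x"
proof -
  have "[(\<Sum>l<m. A i l * x l) = y i] (mod b)" if "i \<in> I" for i
  proof -
    have "(\<Sum>l<m. A i l * x l) mod b = y i"
      using assms that by (simp add: solutions_mod_def)
    then show ?thesis
      by (metis cong_def mod_mod_trivial)
  qed
  then show ?thesis
    unfolding lin_comb_holds_def by (intro cong_sum cong_scalar_left) simp
qed

lemma double_counting_solve:
  fixes b m n F :: nat
  assumes "2 \<le> b" and "1 \<le> m" and "1 \<le> n" and "F \<le> b ^ m"
    and count: "b ^ m + (b ^ n - 1) * b ^ (m - 1) = F * b ^ n + (b ^ m - F) * b ^ (n - 1)"
  shows "n \<le> m \<and> F = b ^ (m - n)"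
proof -
  define B N where "B = b ^ (m - 1)" and "N = b ^ (n - 1)"
  have bm: "b ^ m = b * B" and bn: "b ^ n = b * N"
    using assms(2,3) by (simp_all add: B_def N_def flip: power_Suc)
  have "1 \<le> N"
    using assms(1) by (simp add: N_def)
  have "b * B + (b * N - 1) * B = F * (b * N) + (b * B - F) * N"
    using count unfolding bm bn B_def[symmetric] N_def[symmetric] .
  then have "int (b * B + (b * N - 1) * B) = int (F * (b * N) + (b * B - F) * N)"
    by (rule arg_cong)
  moreover have "1 \<le> b * N" "F \<le> b * B"
    using \<open>1 \<le> N\<close> assms(1,4) bm by simp_all
  ultimately have "int b * int B + (int b * int N - 1) * int B
      = int F * (int b * int N) + (int b * int B - int F) * int N"
    by (simp add: of_nat_diff)
  then have "(int b - 1) * (int B - int F * int N) = 0"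
    by (simp add: algebra_simps)
  then have BFN: "B = F * N"
    using assms(1) by (simp flip: of_nat_mult)
  moreover have "0 < B"
    using assms(1) by (simp add: B_def)
  ultimately have "N \<le> B"
    by (cases F) simp_all
  then have "n \<le> m"
    using assms(1-3) power_le_imp_le_exp[of b "n - 1" "m - 1"] by (simp add: B_def N_def)
  moreover have "B = b ^ (m - n) * N"
    using \<open>n \<le> m\<close> assms(3) by (simp add: B_def N_def flip: power_add)
  ultimately show ?thesis
    using BFN \<open>1 \<le> N\<close> by simp
qed

lemma sum_card_lin_comb_holds_points:
  assumes "prime b" and "finite I" and "rows_indep_mod b m I A"
  shows "(\<Sum>c\<in>PiE I (\<lambda>_. {..<b}). card {x \<in> PiE {..<m} (\<lambda>_. {..<b}). lin_comb_holds b m I A y c x})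
    = b ^ m + (b ^ card I - 1) * b ^ (m - 1)"
proof -
  let ?VI = "PiE I (\<lambda>_. {..<b})" and ?z = "\<lambda>i\<in>I. 0 :: nat"
  let ?card = "\<lambda>c. card {x \<in> PiE {..<m} (\<lambda>_. {..<b}). lin_comb_holds b m I A y c x}"
  have "0 < b"
    using assms(1) prime_gt_0_nat by blast
  then have "?z \<in> ?VI"
    by simp
  have "lin_comb_holds b m I A y ?z x" for x
    unfolding lin_comb_holds_def by (simp cong: sum.cong_simp)
  then have "?card ?z = b ^ m"
    by (simp add: card_PiE)
  have "finite ?VI"
    using assms(2) by (simp add: finite_PiE)
  then have "(\<Sum>c\<in>?VI. ?card c) = ?card ?z + (\<Sum>c\<in>?VI - {?z}. ?card c)"
    using \<open>?z \<in> ?VI\<close> by (rule sum.remove)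
  also have "(\<Sum>c\<in>?VI - {?z}. ?card c) = (\<Sum>c\<in>?VI - {?z}. b ^ (m - 1))"
    using assms(1,3) by (intro sum.cong refl card_lin_comb_holds_points) auto
  also have "\<dots> = (b ^ card I - 1) * b ^ (m - 1)"
    using \<open>?z \<in> ?VI\<close> \<open>finite ?VI\<close> assms(2) by (simp add: card_Diff_singleton card_PiE)
  finally show ?thesis
    by (simp only: \<open>?card ?z = b ^ m\<close>)
qed

lemma sum_card_lin_comb_holds_coeffs:
  assumes "prime b" and "finite I" and "y \<in> PiE I (\<lambda>_. {..<b})"
  shows "(\<Sum>x\<in>PiE {..<m} (\<lambda>_. {..<b}). card {c \<in> PiE I (\<lambda>_. {..<b}). lin_comb_holds b m I A y c x})
    = card (solutions_mod b m I A y) * b ^ card I + (b ^ m - card (solutions_mod b m I A y)) * b ^ (card I - 1)"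
proof -
  let ?VX = "PiE {..<m} (\<lambda>_. {..<b})" and ?F = "solutions_mod b m I A y"
  let ?card = "\<lambda>x. card {c \<in> PiE I (\<lambda>_. {..<b}). lin_comb_holds b m I A y c x}"
  have "?F \<subseteq> ?VX" and "finite ?VX"
    by (auto simp: solutions_mod_def finite_PiE)
  have "(\<Sum>x\<in>?VX. ?card x) = (\<Sum>x\<in>?VX - ?F. ?card x) + (\<Sum>x\<in>?F. ?card x)"
    using \<open>?F \<subseteq> ?VX\<close> \<open>finite ?VX\<close> by (rule sum.subset_diff)
  also have "(\<Sum>x\<in>?VX - ?F. ?card x) = (\<Sum>x\<in>?VX - ?F. b ^ (card I - 1))"
    using assms by (intro sum.cong refl card_lin_comb_holds_coeffs) auto
  also have "(\<Sum>x\<in>?F. ?card x) = (\<Sum>x\<in>?F. b ^ card I)"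
    using assms(2) by (intro sum.cong refl) (simp add: lin_comb_holds_if_solution card_PiE)
  also have "(\<Sum>x\<in>?VX - ?F. b ^ (card I - 1)) + (\<Sum>x\<in>?F. b ^ card I)
      = card ?F * b ^ card I + (b ^ m - card ?F) * b ^ (card I - 1)"
    using \<open>?F \<subseteq> ?VX\<close> \<open>finite ?VX\<close> by (simp add: card_Diff_subset card_PiE finite_subset)
  finally show ?thesis .
qed

text \<open>Double counting of the pairs (c, x) for which the combination c of the
equations holds at x: a nonzero c defines a hyperplane of points x, and a point x that
is not a solution defines a hyperplane of coefficient vectors c.\<close>

lemma card_solutions_mod_prime:
  assumes "prime b" and "finite I" and indep: "rows_indep_mod b m I A"
    and "y \<in> PiE I (\<lambda>_. {..<b})"
  shows "card I \<le> m \<and> card (solutions_mod b m I A y) = b ^ (m - card I)"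
proof (cases "I = {}")
  case True
  then show ?thesis
    by (simp add: solutions_mod_def card_PiE)
next
  case False
  have "2 \<le> b"
    using assms(1) prime_ge_2_nat by blast
  have "1 \<le> card I"
    using False assms(2) by (simp add: Suc_le_eq card_gt_0_iff)
  have "1 \<le> m"
  proof (rule ccontr)
    assume "\<not> 1 \<le> m"
    then show False
      using indep[unfolded rows_indep_mod_def, THEN spec[of _ "\<lambda>_. 1"]] \<open>2 \<le> b\<close> False
      by simp
  qed
  have "finite (PiE I (\<lambda>_. {..<b}))" "finite (PiE {..<m} (\<lambda>_. {..<b}))"
    using assms(2) by (simp_all add: finite_PiE)
  then have "(\<Sum>c\<in>PiE I (\<lambda>_. {..<b}). card {x \<in> PiE {..<m} (\<lambda>_. {..<b}). lin_comb_holds b m I A y c x})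
      = (\<Sum>x\<in>PiE {..<m} (\<lambda>_. {..<b}). card {c \<in> PiE I (\<lambda>_. {..<b}). lin_comb_holds b m I A y c x})"
    unfolding card_eq_sum by (rule sum.swap_restrict)
  moreover have "card (solutions_mod b m I A y) \<le> b ^ m"
    using card_mono[of "PiE {..<m} (\<lambda>_. {..<b})" "solutions_mod b m I A y"]
    by (auto simp: solutions_mod_def finite_PiE card_PiE)
  ultimately show ?thesis
    using double_counting_solve[OF \<open>2 \<le> b\<close> \<open>1 \<le> m\<close> \<open>1 \<le> card I\<close>]
      sum_card_lin_comb_holds_points[OF assms(1-3)] sum_card_lin_comb_holds_coeffs[OF assms(1,2,4)]
    by simp
qed

lemma rows_indep_mod_if_solvable:
  assumes "1 < b" and "finite I" and solvable: "\<forall>y\<in>PiE I (\<lambda>_. {..<b}). solutions_mod b m I A y \<noteq> {}"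
  shows "rows_indep_mod b m I A"
  unfolding rows_indep_mod_def
proof (intro allI impI ballI)
  fix c :: "'a \<Rightarrow> nat" and i0
  assume c: "\<forall>i\<in>I. c i < b" and rel: "\<forall>l<m. (\<Sum>i\<in>I. c i * A i l) mod b = 0" and "i0 \<in> I"
  define y where "y = (\<lambda>i\<in>I. if i = i0 then 1 else (0 :: nat))"
  have "y \<in> PiE I (\<lambda>_. {..<b})"
    using assms(1) by (simp add: y_def)
  then obtain x where "x \<in> solutions_mod b m I A y"
    using solvable by blast
  then have "[(\<Sum>i\<in>I. c i * (\<Sum>l<m. A i l * x l)) = (\<Sum>i\<in>I. c i * y i)] (mod b)"
    using lin_comb_holds_if_solution lin_comb_holds_def by blast
  moreover have "b dvd (\<Sum>i\<in>I. c i * (\<Sum>l<m. A i l * x l))"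
    unfolding sum_lin_comb_swap
  proof (rule dvd_sum)
    fix l :: nat
    assume "l \<in> {..<m}"
    then have "b dvd (\<Sum>i\<in>I. c i * A i l)"
      using rel by (simp add: dvd_eq_mod_eq_0)
    then show "b dvd (\<Sum>i\<in>I. c i * A i l) * x l"
      by (rule dvd_mult2)
  qed
  moreover have "(\<Sum>i\<in>I. c i * y i) = c i0"
  proof -
    have "(\<Sum>i\<in>I. c i * y i) = (\<Sum>i\<in>I. if i = i0 then c i else 0)"
      by (intro sum.cong) (auto simp: y_def)
    then show ?thesis
      using \<open>i0 \<in> I\<close> \<open>finite I\<close> by simp
  qed
  ultimately have "c i0 mod b = 0"
    by (simp add: cong_def dvd_eq_mod_eq_0)
  then show "c i0 = 0"
    using c \<open>i0 \<in> I\<close> by simp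
qed

lemma rows_indep_mod_subset:
  assumes "rows_indep_mod b m I A" and "I' \<subseteq> I" and "finite I" and "0 < b"
  shows "rows_indep_mod b m I' A"
  unfolding rows_indep_mod_def
proof (intro allI impI)
  fix c
  assume bound: "\<forall>i\<in>I'. c i < b" and rel: "\<forall>l<m. (\<Sum>i\<in>I'. c i * A i l) mod b = 0"
  define c' where "c' i = (if i \<in> I' then c i else 0)" for i
  have "(\<Sum>i\<in>I. c' i * A i l) = (\<Sum>i\<in>I'. c i * A i l)" for l
    using assms(2,3) by (intro sum.mono_neutral_cong_right) (auto simp: c'_def)
  then have "\<forall>l<m. (\<Sum>i\<in>I. c' i * A i l) mod b = 0"
    using rel by simp
  moreover have "\<forall>i\<in>I. c' i < b"
    using bound assms(4) by (simp add: c'_def)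
  moreover have "(\<forall>i\<in>I. c' i < b) \<longrightarrow> (\<forall>l<m. (\<Sum>i\<in>I. c' i * A i l) mod b = 0)
      \<longrightarrow> (\<forall>i\<in>I. c' i = 0)"
    using assms(1) unfolding rows_indep_mod_def by (rule spec)
  ultimately have "\<forall>i\<in>I. c' i = 0"
    by blast
  then have "c' i = 0" if "i \<in> I'" for i
    using assms(2) that by blast
  then show "\<forall>i\<in>I'. c i = 0"
    by (metis c'_def)
qed

section \<open>Digital nets and independent rows\<close>

lemma dnet_point_eq_digits_val:
  assumes "0 < b"
  shows "dnet_point b m C k j = real (digits_val b m (\<lambda>i. (\<Sum>l<m. C j i l * digit b k l) mod b)) / real b ^ m"
  using sum_digits_divide_power[OF assms] by (simp add: dnet_point_def)

lemma card_box_eq_card_solutions_mod: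
  assumes "0 < b" and "\<forall>j\<in>u. d j \<le> m" and "\<forall>j\<in>u. a j < b ^ d j"
  shows "card {k. k < b ^ m \<and> (\<forall>j\<in>u. real (a j) / real b ^ d j \<le> dnet_point b m C k j
                \<and> dnet_point b m C k j < real (a j + 1) / real b ^ d j)}
    = card (solutions_mod b m (Sigma u (\<lambda>j. {..<d j})) (\<lambda>(j, i). C j i)
              (\<lambda>(j, i). a j div b ^ (d j - 1 - i) mod b))"
    (is "card {k. k < b ^ m \<and> ?box k} = card ?S")
proof -
  let ?f = "\<lambda>k. restrict (digit b k) {..<m}"
  have "?box k \<longleftrightarrow> (\<forall>j\<in>u. \<forall>i<d j. (\<Sum>l<m. C j i l * digit b k l) mod b = a j div b ^ (d j - 1 - i) mod b)"
    for k
  proof (rule ball_cong[OF refl])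
    fix j
    assume "j \<in> u"
    then show "real (a j) / real b ^ d j \<le> dnet_point b m C k j
          \<and> dnet_point b m C k j < real (a j + 1) / real b ^ d j
        \<longleftrightarrow> (\<forall>i<d j. (\<Sum>l<m. C j i l * digit b k l) mod b = a j div b ^ (d j - 1 - i) mod b)"
      unfolding dnet_point_eq_digits_val[OF assms(1)] using assms by (intro in_interval_iff_digits) auto
  qed
  moreover have "(\<Sum>l<m. C j i l * ?f k l) = (\<Sum>l<m. C j i l * digit b k l)" for j i k
    by (intro sum.cong) auto
  ultimately have "?box k \<longleftrightarrow> ?f k \<in> ?S" if "k < b ^ m" for k
    using assms(1) by (auto simp: solutions_mod_def restrict_PiE_iff digit_def)
  then have "{k. k < b ^ m \<and> ?box k} = {k \<in> {..<b ^ m}. ?f k \<in> ?S}"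
    by auto
  moreover have "?S \<subseteq> PiE {..<m} (\<lambda>_. {..<b})"
    by (auto simp: solutions_mod_def)
  ultimately show ?thesis
    using card_preimage_bij_betw[OF bij_betw_digit_vector[OF assms(1)]] by simp
qed

lemma rows_lin_indep_iff_rows_indep_mod:
  assumes "finite J"
  shows "rows_lin_indep b m C J d \<longleftrightarrow> rows_indep_mod b m (Sigma J (\<lambda>j. {..<d j})) (\<lambda>(j, i). C j i)"
proof -
  have all_uncurry: "(\<forall>c :: nat \<times> nat \<Rightarrow> nat. P c) \<longleftrightarrow> (\<forall>c. P (case_prod c))" for P
    by (metis case_prod_curry)
  have "(\<Sum>q\<in>Sigma J (\<lambda>j. {..<d j}). case_prod c q * case_prod C q k) = (\<Sum>j\<in>J. \<Sum>i<d j. c j i * C j i k)"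
    for c :: "nat \<Rightarrow> nat \<Rightarrow> nat" and k
    using assms by (simp add: sum.Sigma split_def)
  then show ?thesis
    unfolding rows_lin_indep_def rows_indep_mod_def all_uncurry by (simp add: Ball_def imp_conjL)
qed

lemma solutions_mod_ne_empty_if_is_proj_tms_net:
  assumes "1 < b" and net: "is_proj_tms_net b m C u t" and "sum d u = m - t"
    and "\<forall>j\<in>u. d j \<le> m" and y: "y \<in> PiE (Sigma u (\<lambda>j. {..<d j})) (\<lambda>_. {..<b})"
  shows "solutions_mod b m (Sigma u (\<lambda>j. {..<d j})) (\<lambda>(j, i). C j i) y \<noteq> {}"
proof -
  let ?I = "Sigma u (\<lambda>j. {..<d j})" and ?A = "\<lambda>(j, i). C j i"
  define a where "a j = digits_val b (d j) (\<lambda>i. y (j, i))" for j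
  have y_lt: "\<forall>i<d j. y (j, i) < b" if "j \<in> u" for j
    using y that by auto
  then have a_lt: "\<forall>j\<in>u. a j < b ^ d j"
    by (simp add: a_def digits_val_less)
  have "\<forall>j\<in>u. \<forall>i<d j. a j div b ^ (d j - 1 - i) mod b = y (j, i)"
  proof (intro ballI allI impI)
    fix j i
    assume "j \<in> u" and "i < d j"
    then show "a j div b ^ (d j - 1 - i) mod b = y (j, i)"
      using digits_val_digit[OF y_lt, of j i] by (simp add: a_def)
  qed
  then have sol: "solutions_mod b m ?I ?A (\<lambda>(j, i). a j div b ^ (d j - 1 - i) mod b)
      = solutions_mod b m ?I ?A y"
    by (intro solutions_mod_cong) auto
  have count: "card {k. k < b ^ m \<and> (\<forall>j\<in>u. real (a j) / real b ^ d j \<le> dnet_point b m C k j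
      \<and> dnet_point b m C k j < real (a j + 1) / real b ^ d j)} = b ^ t"
    using net[unfolded is_proj_tms_net_def, THEN conjunct2, rule_format, OF assms(3) a_lt[rule_format]] .
  have box: "card {k. k < b ^ m \<and> (\<forall>j\<in>u. real (a j) / real b ^ d j \<le> dnet_point b m C k j
      \<and> dnet_point b m C k j < real (a j + 1) / real b ^ d j)}
      = card (solutions_mod b m ?I ?A (\<lambda>(j, i). a j div b ^ (d j - 1 - i) mod b))"
    using \<open>1 < b\<close> assms(4) a_lt by (intro card_box_eq_card_solutions_mod) auto
  have "card (solutions_mod b m ?I ?A y) = b ^ t"
    by (simp only: sol[symmetric] box[symmetric] count)
  then show ?thesis
    using \<open>1 < b\<close> by auto
qed

lemma rows_lin_indep_if_is_proj_tms_net: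
  assumes "prime b" and "finite u" and "is_proj_tms_net b m C u t" and "sum d u = m - t"
  shows "rows_lin_indep b m C u d"
proof -
  have "1 < b"
    using assms(1) prime_gt_1_nat by blast
  have "\<forall>j\<in>u. d j \<le> m"
    using member_le_sum[of _ u d] assms(2,4) by fastforce
  then have "rows_indep_mod b m (Sigma u (\<lambda>j. {..<d j})) (\<lambda>(j, i). C j i)"
    using \<open>1 < b\<close> assms(2-4)
    by (intro rows_indep_mod_if_solvable ballI solutions_mod_ne_empty_if_is_proj_tms_net) auto
  then show ?thesis
    using assms(2) by (simp add: rows_lin_indep_iff_rows_indep_mod)
qed

lemma is_proj_tms_net_if_rows_lin_indep:
  assumes "prime b" and "finite u" and "T \<le> m"
    and indep: "\<forall>d. sum d u = m - T \<longrightarrow> rows_lin_indep b m C u d"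
  shows "is_proj_tms_net b m C u T"
  unfolding is_proj_tms_net_def
proof (intro conjI allI impI)
  fix d a :: "nat \<Rightarrow> nat"
  assume sum: "sum d u = m - T" and a: "\<forall>j\<in>u. a j < b ^ d j"
  let ?I = "Sigma u (\<lambda>j. {..<d j})" and ?A = "\<lambda>(j, i). C j i"
  let ?y = "\<lambda>(j, i). a j div b ^ (d j - 1 - i) mod b"
  have "0 < b"
    using assms(1) prime_gt_0_nat by blast
  have "\<forall>j\<in>u. d j \<le> m"
    using member_le_sum[of _ u d] assms(2) sum by fastforce
  have "card ?I = m - T"
    using assms(2) sum by simp
  have indep_mod: "rows_indep_mod b m ?I ?A"
    using indep sum assms(2) by (simp add: rows_lin_indep_iff_rows_indep_mod)
  have "finite ?I" and y: "restrict ?y ?I \<in> PiE ?I (\<lambda>_. {..<b})"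
    using assms(2) \<open>0 < b\<close> by (auto simp: restrict_PiE_iff)
  have "card (solutions_mod b m ?I ?A (restrict ?y ?I)) = b ^ (m - card ?I)"
    using card_solutions_mod_prime[OF assms(1) \<open>finite ?I\<close> indep_mod y] by blast
  moreover have "solutions_mod b m ?I ?A (restrict ?y ?I) = solutions_mod b m ?I ?A ?y"
    by (rule solutions_mod_cong) simp
  ultimately have "card (solutions_mod b m ?I ?A ?y) = b ^ T"
    using assms(3) \<open>card ?I = m - T\<close> by simp
  then show "card {k. k < b ^ m \<and> (\<forall>j\<in>u. real (a j) / real b ^ d j \<le> dnet_point b m C k j
      \<and> dnet_point b m C k j < real (a j + 1) / real b ^ d j)} = b ^ T"
    unfolding card_box_eq_card_solutions_mod[OF \<open>0 < b\<close> \<open>\<forall>j\<in>u. d j \<le> m\<close> a] .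
qed (rule assms(3))

lemma rows_lin_indep_mono:
  assumes "rows_lin_indep b m C J d'" and "\<forall>j\<in>J. d j \<le> d' j" and "finite J" and "0 < b"
  shows "rows_lin_indep b m C J d"
proof -
  have "Sigma J (\<lambda>j. {..<d j}) \<subseteq> Sigma J (\<lambda>j. {..<d' j})"
    using assms(2) by auto
  then show ?thesis
    using assms by (simp add: rows_lin_indep_iff_rows_indep_mod rows_indep_mod_subset)
qed

lemma rows_lin_indep_cong:
  assumes "\<forall>j\<in>J. \<forall>i<d j. \<forall>k<m. C j i k = C' j i k"
  shows "rows_lin_indep b m C J d \<longleftrightarrow> rows_lin_indep b m C' J d"
proof -
  have "(\<Sum>j\<in>J. \<Sum>i<d j. c j i * C j i k) = (\<Sum>j\<in>J. \<Sum>i<d j. c j i * C' j i k)" if "k < m" for c k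
    using assms that by (intro sum.cong refl) auto
  then have "(\<forall>k<m. (\<Sum>j\<in>J. \<Sum>i<d j. c j i * C j i k) mod b = 0)
      \<longleftrightarrow> (\<forall>k<m. (\<Sum>j\<in>J. \<Sum>i<d j. c j i * C' j i k) mod b = 0)" for c
    by simp
  then show ?thesis
    unfolding rows_lin_indep_def by simp
qed

lemma not_rows_lin_indep_zero_row:
  assumes "1 < b" and "j \<in> J" and "r < d j" and "\<forall>k<m. C j r k = 0"
  shows "\<not> rows_lin_indep b m C J d"
proof
  define c where "c j' i = (if j' = j \<and> i = r then 1 else (0 :: nat))" for j' i
  assume indep: "rows_lin_indep b m C J d"
  have bound: "\<forall>j\<in>J. \<forall>i<d j. c j i < b"
    using assms(1) by (simp add: c_def)
  have zero: "c j' i * C j' i k = 0" if "k < m" for j' i k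
    using assms(4) that by (simp add: c_def)
  have rel: "\<forall>k<m. (\<Sum>j\<in>J. \<Sum>i<d j. c j i * C j i k) mod b = 0"
    by (simp add: zero)
  have "(\<forall>j\<in>J. \<forall>i<d j. c j i < b) \<longrightarrow> (\<forall>k<m. (\<Sum>j\<in>J. \<Sum>i<d j. c j i * C j i k) mod b = 0)
      \<longrightarrow> (\<forall>j\<in>J. \<forall>i<d j. c j i = 0)"
    using indep unfolding rows_lin_indep_def by (rule spec)
  then have "c j r = 0"
    using mp[OF mp[OF _ bound] rel] assms(2,3) by blast
  then show False
    by (simp add: c_def)
qed

lemma sum_le_if_rows_lin_indep:
  assumes "prime b" and "finite J" and "rows_lin_indep b m C J d"
  shows "sum d J \<le> m"
proof -
  let ?I = "Sigma J (\<lambda>j. {..<d j})"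
  have "0 < b"
    using assms(1) prime_gt_0_nat by blast
  then have "card ?I \<le> m"
    using assms card_solutions_mod_prime[OF assms(1), of ?I m "\<lambda>(j, i). C j i" "\<lambda>_\<in>?I. 0"]
    by (simp add: rows_lin_indep_iff_rows_indep_mod)
  then show ?thesis
    using assms(2) by simp
qed

lemma rows_lin_indep_if_sum_le:
  assumes "prime b" and "finite u" and "is_proj_tms_net b m C u t" and "sum d u \<le> m - t"
  shows "rows_lin_indep b m C u d"
proof (cases "u = {}")
  case True
  then show ?thesis
    by (simp add: rows_lin_indep_def)
next
  case False
  then obtain j0 where "j0 \<in> u"
    by blast
  define d' where "d' = d(j0 := d j0 + (m - t - sum d u))"
  have "sum d' u = sum d u + (m - t - sum d u)"
    using \<open>j0 \<in> u\<close> assms(2) by (simp add: d'_def sum.remove)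
  then have "rows_lin_indep b m C u d'"
    using assms by (intro rows_lin_indep_if_is_proj_tms_net) auto
  moreover have "0 < b"
    using assms(1) prime_gt_0_nat by blast
  ultimately show ?thesis
    using assms(2) by (elim rows_lin_indep_mono) (auto simp: d'_def)
qed

section \<open>The linear independence parameter of row reduced matrices\<close>

lemma lin_indep_param_bound:
  assumes "prime b" and "finite J" and "J \<noteq> {}"
    and "\<forall>d. sum d J = e \<longrightarrow> rows_lin_indep b m C J d"
  shows "e \<le> m"
proof -
  obtain j where "j \<in> J"
    using assms(3) by blast
  then have sum: "sum (\<lambda>j'. if j' = j then e else 0) J = e"
    using assms(2) by simp
  then have "rows_lin_indep b m C J (\<lambda>j'. if j' = j then e else 0)"
    using assms(4) by blast
  then show ?thesis
    using sum_le_if_rows_lin_indep[OF assms(1,2)] sum by metis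
qed

lemma le_lin_indep_param:
  assumes "prime b" and "finite J" and "J \<noteq> {}"
    and "\<forall>d. sum d J = e \<longrightarrow> rows_lin_indep b m C J d"
  shows "e \<le> lin_indep_param b m C J"
  unfolding lin_indep_param_def
proof (rule Greatest_le_nat[of _ e m])
  fix e'
  assume "\<forall>d. sum d J = e' \<longrightarrow> rows_lin_indep b m C J d"
  then show "e' \<le> m"
    by (rule lin_indep_param_bound[OF assms(1-3)])
qed (rule assms(4))

lemma rows_lin_indep_lin_indep_param:
  assumes "prime b" and "finite J" and "J \<noteq> {}"
  shows "\<forall>d. sum d J = lin_indep_param b m C J \<longrightarrow> rows_lin_indep b m C J d"
proof -
  have "\<forall>d. sum d J = 0 \<longrightarrow> rows_lin_indep b m C J d"
  proof (intro allI impI)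
    fix d :: "nat \<Rightarrow> nat"
    assume "sum d J = 0"
    then have "\<forall>j\<in>J. d j = 0"
      using assms(2) by simp
    then show "rows_lin_indep b m C J d"
      by (simp add: rows_lin_indep_def)
  qed
  then show ?thesis
    unfolding lin_indep_param_def
  proof (rule GreatestI_nat[of _ 0 m])
    fix e
    assume "\<forall>d. sum d J = e \<longrightarrow> rows_lin_indep b m C J d"
    then show "e \<le> m"
      by (rule lin_indep_param_bound[OF assms])
  qed
qed

lemma lin_indep_param_le_zero_row:
  assumes "prime b" and "finite J" and "j \<in> J" and "\<forall>k<m. C j r k = 0"
  shows "lin_indep_param b m C J \<le> r"
proof (rule ccontr)
  let ?e = "lin_indep_param b m C J"
  assume "\<not> ?e \<le> r"
  have "J \<noteq> {}"
    using assms(3) by blast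
  have "sum (\<lambda>j'. if j' = j then ?e else 0) J = ?e"
    using assms(2,3) by simp
  then have "rows_lin_indep b m C J (\<lambda>j'. if j' = j then ?e else 0)"
    using rows_lin_indep_lin_indep_param[OF assms(1,2) \<open>J \<noteq> {}\<close>] by blast
  moreover have "1 < b"
    using assms(1) prime_gt_1_nat by blast
  then have "\<not> rows_lin_indep b m C J (\<lambda>j'. if j' = j then ?e else 0)"
    using \<open>\<not> ?e \<le> r\<close> assms(3,4) by (intro not_rows_lin_indep_zero_row) auto
  ultimately show False
    by contradiction
qed

lemma rows_lin_indep_row_reduce:
  assumes "prime b" and "finite u" and "is_proj_tms_net b m C u t"
    and "\<forall>j\<in>u. w j \<le> W" and "sum d u \<le> m - max W t"
  shows "rows_lin_indep b m (row_reduce m w C) u d"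
proof -
  have "\<forall>j\<in>u. \<forall>i<d j. \<forall>k<m. row_reduce m w C j i k = C j i k"
  proof (intro ballI allI impI)
    fix j i k
    assume "j \<in> u" and "i < d j"
    then have "i < m - w j"
      using member_le_sum[of j u d] assms(2,4,5) by fastforce
    then show "row_reduce m w C j i k = C j i k"
      by (simp add: row_reduce_def)
  qed
  moreover have "rows_lin_indep b m C u d"
    using assms(5) by (intro rows_lin_indep_if_sum_le[OF assms(1-3)]) simp
  ultimately show ?thesis
    using rows_lin_indep_cong by blast
qed

theorem corollary1:
  fixes b s m :: nat and C :: "nat \<Rightarrow> nat \<Rightarrow> nat \<Rightarrow> nat"
    and t :: "nat set \<Rightarrow> nat" and w :: "nat \<Rightarrow> nat" and u :: "nat set"
  assumes "prime b"
    and "\<forall>j\<in>{1..s}. \<forall>i<m. \<forall>k<m. C j i k < b"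
    and "\<forall>v. v \<subseteq> {1..s} \<and> v \<noteq> {} \<longrightarrow> is_proj_tms_net b m C v (t v)"
    and "w 1 = 0"
    and "\<forall>i j. 1 \<le> i \<and> i \<le> j \<and> j \<le> s \<longrightarrow> w i \<le> w j"
    and "u \<subseteq> {1..s}" and "u \<noteq> {}"
  shows "max 0 (int m - int (max (w (Max u)) (t u)))
           \<le> int (lin_indep_param b m (row_reduce m w C) u)
       \<and> int (lin_indep_param b m (row_reduce m w C) u) \<le> max 0 (int m - int (w (Max u)))
       \<and> min_quality b m (row_reduce m w C) u \<le> min m (max (w (Max u)) (t u))"
proof -
  let ?W = "w (Max u)" and ?Cr = "row_reduce m w C"
  have "finite u"
    using assms(6) finite_subset by blast
  then have "Max u \<in> u" and "\<forall>j\<in>u. w j \<le> ?W"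
    using assms(5-7) by (auto intro!: assms(5)[rule_format] simp: subset_eq)
  have net: "is_proj_tms_net b m C u (t u)"
    using assms(3,6,7) by blast
  have reduced: "\<forall>d. sum d u = m - max ?W (t u) \<longrightarrow> rows_lin_indep b m ?Cr u d"
    using rows_lin_indep_row_reduce[OF assms(1) \<open>finite u\<close> net \<open>\<forall>j\<in>u. w j \<le> ?W\<close>] by simp
  have "m - max ?W (t u) \<le> lin_indep_param b m ?Cr u"
    using le_lin_indep_param[OF assms(1) \<open>finite u\<close> assms(7) reduced] .
  moreover have "\<forall>k<m. ?Cr (Max u) (m - min m ?W) k = 0"
    by (simp add: row_reduce_def)
  then have "lin_indep_param b m ?Cr u \<le> m - min m ?W"
    by (rule lin_indep_param_le_zero_row[OF assms(1) \<open>finite u\<close> \<open>Max u \<in> u\<close>])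
  moreover have "is_proj_tms_net b m ?Cr u (min m (max ?W (t u)))"
    using reduced by (intro is_proj_tms_net_if_rows_lin_indep[OF assms(1) \<open>finite u\<close>]) auto
  then have "min_quality b m ?Cr u \<le> min m (max ?W (t u))"
    unfolding min_quality_def by (rule Least_le)
  ultimately show ?thesis
    by auto
qed

end
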